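(* Let $L>0$, let $\bar c:[0,L]\to(0,\infty)$ and $a,d:[0,L]\to\mathbb{R}$ be continuous, and let $R_0,R_L\in\mathbb{R}$ with $R_0R_L\neq 0$. For $\delta\in\{1,a,d\}$ define $I_{\bar c/\delta}(x)=\int_0^x \frac{\delta(y)}{\bar c(y)}\,dy$, writing $I_{\bar c}=I_{\bar c/1}$. For $s\in\mathbb{C}$ consider the boundary value problem for $\hat W=(\hat w_1,\hat w_2)^T:[0,L]\to\mathbb{C}^2$: $$s\hat w_1-\bar c(x)\hat w_1'=a(x)\hat w_1,\qquad s\hat w_2+\bar c(x)\hat w_2'=d(x)\hat w_2,\qquad x\in[0,L],$$ $$\hat w_2(0)=R_0\,\hat w_1(0),\qquad \hat w_1(L)=R_L\,\hat w_2(L).$$ Then this problem has a nontrivial solution if and only if $s=s_n$ for some $n\in\mathbb{Z}$, where $$s_n=\frac{\ln(R_0R_L)+I_{\bar c/d}(L)+I_{\bar c/a}(L)+2\pi n i}{2\,I_{\bar c}(L)},$$ and $\ln(R_0R_L)$ denotes any fixed complex logarithm of the nonzero real number $R_0R_L$. *)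

theory Defs
  imports "HOL-Analysis.Analysis"
begin

definition Iint :: "(real \<Rightarrow> real) \<Rightarrow> (real \<Rightarrow> real) \<Rightarrow> real \<Rightarrow> real" where
  "Iint c \<delta> x = integral {0..x} (\<lambda>y. \<delta> y / c y)"

definition bvp_solution ::
  "real \<Rightarrow> (real \<Rightarrow> real) \<Rightarrow> (real \<Rightarrow> real) \<Rightarrow> (real \<Rightarrow> real) \<Rightarrow> real \<Rightarrow> real \<Rightarrow> complex
   \<Rightarrow> (real \<Rightarrow> complex) \<Rightarrow> (real \<Rightarrow> complex) \<Rightarrow> bool" where
  "bvp_solution L c a d R0 RL s w1 w2 \<longleftrightarrow>
     (\<exists>w1' w2'. (\<forall>x\<in>{0..L}.
        (w1 has_vector_derivative w1' x) (at x within {0..L}) \<and>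
        (w2 has_vector_derivative w2' x) (at x within {0..L}) \<and>
        s * w1 x - complex_of_real (c x) * w1' x = complex_of_real (a x) * w1 x \<and>
        s * w2 x + complex_of_real (c x) * w2' x = complex_of_real (d x) * w2 x))
     \<and> w2 0 = complex_of_real R0 * w1 0
     \<and> w1 L = complex_of_real RL * w2 L"

end

theory Submission
  imports Defs
begin

text \<open>Each equation is a scalar linear ODE, so a solution is determined by its value at 0:
  \<open>w\<^sub>1 = w\<^sub>1(0) exp(s I\<^sub>c - I\<^sub>c\<^sub>/\<^sub>a)\<close> and \<open>w\<^sub>2 = R\<^sub>0 w\<^sub>1(0) exp(I\<^sub>c\<^sub>/\<^sub>d - s I\<^sub>c)\<close>.
  A nontrivial solution therefore exists iff the remaining boundary condition at \<open>L\<close> holds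
  with \<open>w\<^sub>1(0) = 1\<close>, i.e. \<open>exp(2 s I\<^sub>c(L) - I\<^sub>c\<^sub>/\<^sub>a(L) - I\<^sub>c\<^sub>/\<^sub>d(L)) = R\<^sub>0 R\<^sub>L = exp l\<close>, and the
  solutions of this exponential equation are the \<open>s\<^sub>n\<close>.\<close>

lemma has_vector_derivative_exp_compose:
  fixes \<phi> :: "real \<Rightarrow> complex"
  assumes "(\<phi> has_vector_derivative k) (at x within S)"
  shows "((\<lambda>x. exp (\<phi> x)) has_vector_derivative k * exp (\<phi> x)) (at x within S)"
  using field_vector_diff_chain_within[OF assms has_field_derivative_at_within[OF DERIV_exp]]
  by (simp add: o_def)

lemma linear_ode_solution_eq_exp:
  fixes w \<phi> k :: "real \<Rightarrow> complex"
  assumes "convex S" and "x\<^sub>0 \<in> S" and "x \<in> S"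
    and w': "\<And>x. x \<in> S \<Longrightarrow> (w has_vector_derivative k x * w x) (at x within S)"
    and \<phi>': "\<And>x. x \<in> S \<Longrightarrow> (\<phi> has_vector_derivative k x) (at x within S)"
  shows "w x = w x\<^sub>0 * exp (\<phi> x - \<phi> x\<^sub>0)"
proof -
  have "((\<lambda>x. w x * exp (- \<phi> x)) has_vector_derivative 0) (at x within S)" if "x \<in> S" for x
  proof -
    have "((\<lambda>x. w x * exp (- \<phi> x)) has_vector_derivative
        w x * (- k x * exp (- \<phi> x)) + k x * w x * exp (- \<phi> x)) (at x within S)"
      by (intro has_vector_derivative_mult w' that has_vector_derivative_exp_compose
          has_vector_derivative_minus \<phi>')
    then show ?thesis by (simp add: algebra_simps)
  qed
  then obtain C where "\<And>x. x \<in> S \<Longrightarrow> w x * exp (- \<phi> x) = C"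
    using has_vector_derivative_zero_constant[OF \<open>convex S\<close>] by blast
  then have "w x * exp (- \<phi> x) = w x\<^sub>0 * exp (- \<phi> x\<^sub>0)"
    using \<open>x \<in> S\<close> \<open>x\<^sub>0 \<in> S\<close> by metis
  then show ?thesis by (simp add: exp_diff exp_minus field_simps)
qed

lemma exp_sub_eq_exp_mult_exp_iff:
  fixes s l A D P :: complex
  assumes "P \<noteq> 0"
  shows "exp (s * P - A) = exp l * exp (D - s * P)
    \<longleftrightarrow> (\<exists>n::int. s = (l + D + A + 2 * complex_of_real pi * of_int n * \<i>) / (2 * P))"
proof -
  have "exp (s * P - A) = exp l * exp (D - s * P) \<longleftrightarrow> exp (s * P - A) = exp (l + D - s * P)"
    by (simp add: exp_add exp_diff)
  also have "\<dots> \<longleftrightarrow> (\<exists>n::int. s * P - A = l + D - s * P + of_int (2 * n) * pi * \<i>)"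
    by (rule exp_eq)
  also have "\<dots> \<longleftrightarrow> (\<exists>n::int. s = (l + D + A + 2 * complex_of_real pi * of_int n * \<i>) / (2 * P))"
    using assms by (intro ex_cong1) (auto simp: field_simps)
  finally show ?thesis .
qed

locale diagonal_hyperbolic_bvp =
  fixes L :: real and c a d :: "real \<Rightarrow> real"
  assumes L_pos: "L > 0"
    and c_cont: "continuous_on {0..L} c" and c_pos: "\<And>x. x \<in> {0..L} \<Longrightarrow> c x > 0"
    and a_cont: "continuous_on {0..L} a" and d_cont: "continuous_on {0..L} d"
begin

lemma continuous_on_divide_c:
  assumes "continuous_on {0..L} \<delta>"
  shows "continuous_on {0..L} (\<lambda>y. \<delta> y / c y)"
  using c_pos by (intro continuous_intros assms c_cont) force

lemma has_vector_derivative_Iint: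
  assumes "continuous_on {0..L} \<delta>" and "x \<in> {0..L}"
  shows "((\<lambda>x. complex_of_real (Iint c \<delta> x)) has_vector_derivative of_real (\<delta> x / c x))
    (at x within {0..L})"
  unfolding Iint_def
  by (intro has_vector_derivative_of_real integral_has_real_derivative
      continuous_on_divide_c assms)

lemma Iint_one_pos: "Iint c (\<lambda>_. 1) L > 0"
proof -
  have "integral {0..L} (\<lambda>_. 0) < integral {0..L} (\<lambda>y. 1 / c y)"
    using L_pos c_pos
    by (intro integral_less_real continuous_on_divide_c) auto
  then show ?thesis by (simp add: Iint_def)
qed

definition phase1 :: "complex \<Rightarrow> real \<Rightarrow> complex" where
  "phase1 s x = s * of_real (Iint c (\<lambda>_. 1) x) - of_real (Iint c a x)"

definition phase2 :: "complex \<Rightarrow> real \<Rightarrow> complex" where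
  "phase2 s x = of_real (Iint c d x) - s * of_real (Iint c (\<lambda>_. 1) x)"

lemma phase_0 [simp]: "phase1 s 0 = 0" "phase2 s 0 = 0"
  by (simp_all add: phase1_def phase2_def Iint_def)

lemma has_vector_derivative_phase1:
  fixes s :: complex
  assumes "x \<in> {0..L}"
  shows "(phase1 s has_vector_derivative (s - a x) / c x) (at x within {0..L})"
proof -
  have "(phase1 s has_vector_derivative s * of_real (1 / c x) - of_real (a x / c x))
      (at x within {0..L})"
    unfolding phase1_def
    by (intro has_vector_derivative_diff has_vector_derivative_mult_right
        has_vector_derivative_Iint continuous_on_const a_cont assms)
  then show ?thesis by (simp add: diff_divide_distrib)
qed

lemma has_vector_derivative_phase2:
  fixes s :: complex
  assumes "x \<in> {0..L}"
  shows "(phase2 s has_vector_derivative (d x - s) / c x) (at x within {0..L})"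
proof -
  have "(phase2 s has_vector_derivative of_real (d x / c x) - s * of_real (1 / c x))
      (at x within {0..L})"
    unfolding phase2_def
    by (intro has_vector_derivative_diff has_vector_derivative_mult_right
        has_vector_derivative_Iint continuous_on_const d_cont assms)
  then show ?thesis by (simp add: diff_divide_distrib)
qed

lemma bvp_solution_eq_exp_phase:
  assumes "bvp_solution L c a d R0 RL s w1 w2" and "x \<in> {0..L}"
  shows "w1 x = w1 0 * exp (phase1 s x)" and "w2 x = R0 * w1 0 * exp (phase2 s x)"
proof -
  obtain w1' w2' where
    derivs: "\<And>x. x \<in> {0..L} \<Longrightarrow> (w1 has_vector_derivative w1' x) (at x within {0..L}) \<and>
        (w2 has_vector_derivative w2' x) (at x within {0..L})"
    and eqs: "\<And>x. x \<in> {0..L} \<Longrightarrow> s * w1 x - of_real (c x) * w1' x = of_real (a x) * w1 x \<and>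
        s * w2 x + of_real (c x) * w2' x = of_real (d x) * w2 x"
    and "w2 0 = R0 * w1 0"
    using assms(1) unfolding bvp_solution_def by blast
  have "w1' x = (s - a x) / c x * w1 x \<and> w2' x = (d x - s) / c x * w2 x" if "x \<in> {0..L}" for x
    using eqs[OF that] c_pos[OF that] by (auto simp: field_simps)
  with derivs have
    w1': "(w1 has_vector_derivative (s - a x) / c x * w1 x) (at x within {0..L})" and
    w2': "(w2 has_vector_derivative (d x - s) / c x * w2 x) (at x within {0..L})"
    if "x \<in> {0..L}" for x
    using that by auto
  have "0 \<in> {0..L}" using L_pos by simp
  note linear_ode_solution_eq_exp[OF convex_real_interval(5) this \<open>x \<in> {0..L}\<close>]
  from this[OF w1' has_vector_derivative_phase1] this[OF w2' has_vector_derivative_phase2]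
  show "w1 x = w1 0 * exp (phase1 s x)" and "w2 x = R0 * w1 0 * exp (phase2 s x)"
    using \<open>w2 0 = R0 * w1 0\<close> by simp_all
qed

lemma bvp_solution_exp_phase:
  assumes "exp (phase1 s L) = of_real (R0 * RL) * exp (phase2 s L)"
  shows "bvp_solution L c a d R0 RL s (\<lambda>x. exp (phase1 s x)) (\<lambda>x. R0 * exp (phase2 s x))"
  unfolding bvp_solution_def
proof (intro conjI exI ballI)
  fix x assume x: "x \<in> {0..L}"
  show "((\<lambda>x. exp (phase1 s x)) has_vector_derivative (s - a x) / c x * exp (phase1 s x))
      (at x within {0..L})"
    by (intro has_vector_derivative_exp_compose has_vector_derivative_phase1 x)
  show "((\<lambda>x. R0 * exp (phase2 s x)) has_vector_derivative
      R0 * ((d x - s) / c x * exp (phase2 s x))) (at x within {0..L})"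
    by (intro has_vector_derivative_mult_right has_vector_derivative_exp_compose
        has_vector_derivative_phase2 x)
  show "s * exp (phase1 s x) - c x * ((s - a x) / c x * exp (phase1 s x))
      = a x * exp (phase1 s x)"
    and "s * (R0 * exp (phase2 s x)) + c x * (R0 * ((d x - s) / c x * exp (phase2 s x)))
      = d x * (R0 * exp (phase2 s x))"
    using c_pos[OF x] by (auto simp: field_simps)
qed (use assms in simp_all)

lemma nontrivial_bvp_solution_iff:
  "(\<exists>w1 w2. bvp_solution L c a d R0 RL s w1 w2 \<and> (\<exists>x\<in>{0..L}. w1 x \<noteq> 0 \<or> w2 x \<noteq> 0))
    \<longleftrightarrow> exp (phase1 s L) = of_real (R0 * RL) * exp (phase2 s L)"
proof
  assume "\<exists>w1 w2. bvp_solution L c a d R0 RL s w1 w2 \<and> (\<exists>x\<in>{0..L}. w1 x \<noteq> 0 \<or> w2 x \<noteq> 0)"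
  then obtain w1 w2 x where sol: "bvp_solution L c a d R0 RL s w1 w2"
    and "x \<in> {0..L}" and "w1 x \<noteq> 0 \<or> w2 x \<noteq> 0"
    by blast
  with bvp_solution_eq_exp_phase[OF sol \<open>x \<in> {0..L}\<close>] have "w1 0 \<noteq> 0"
    by auto
  have "L \<in> {0..L}" using L_pos by simp
  from bvp_solution_eq_exp_phase[OF sol this] and sol
  have "w1 0 * exp (phase1 s L) = w1 0 * (of_real (R0 * RL) * exp (phase2 s L))"
    by (simp add: bvp_solution_def ac_simps)
  with \<open>w1 0 \<noteq> 0\<close> show "exp (phase1 s L) = of_real (R0 * RL) * exp (phase2 s L)"
    by simp
next
  assume "exp (phase1 s L) = of_real (R0 * RL) * exp (phase2 s L)"
  then have "bvp_solution L c a d R0 RL s (\<lambda>x. exp (phase1 s x)) (\<lambda>x. R0 * exp (phase2 s x))"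
    by (rule bvp_solution_exp_phase)
  moreover have "0 \<in> {0..L}" using L_pos by simp
  ultimately show "\<exists>w1 w2. bvp_solution L c a d R0 RL s w1 w2 \<and> (\<exists>x\<in>{0..L}. w1 x \<noteq> 0 \<or> w2 x \<noteq> 0)"
    by (intro exI conjI bexI[of _ 0]) auto
qed

end

theorem mainTheorem2:
  fixes L R0 RL :: real and c a d :: "real \<Rightarrow> real" and s l :: complex
  assumes "L > 0"
    and "continuous_on {0..L} c" and "\<forall>x\<in>{0..L}. c x > 0"
    and "continuous_on {0..L} a" and "continuous_on {0..L} d"
    and "R0 * RL \<noteq> 0"
    and "exp l = complex_of_real (R0 * RL)"
  shows "(\<exists>w1 w2. bvp_solution L c a d R0 RL s w1 w2 \<and> (\<exists>x\<in>{0..L}. w1 x \<noteq> 0 \<or> w2 x \<noteq> 0))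
     \<longleftrightarrow> (\<exists>n::int. s = (l + complex_of_real (Iint c d L) + complex_of_real (Iint c a L)
                          + 2 * complex_of_real pi * of_int n * \<i>)
                         / (2 * complex_of_real (Iint c (\<lambda>_. 1) L)))"
proof -
  interpret diagonal_hyperbolic_bvp L c a d
    using assms(1-5) by unfold_locales auto
  have "complex_of_real (Iint c (\<lambda>_. 1) L) \<noteq> 0"
    using Iint_one_pos by simp
  then show ?thesis
    unfolding nontrivial_bvp_solution_iff phase1_def phase2_def assms(7)[symmetric]
    by (simp add: exp_sub_eq_exp_mult_exp_iff)
qed

end
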